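(* Let $(S,\mu)$ be a $\sigma$-finite measure space. Every uniformly integrable set of graphons in $L^1(S\times S,\mu\times\mu)$ is relatively complete for the cut norm, i.e. every sequence in the set that is Cauchy for $\|\cdot\|_\square$ converges in $\|\cdot\|_\square$ to some graphon on $(S,\mu)$.
   Context: A graphon on $(S,\mu)$ is a symmetric function $W\in L^1(S\times S,\mu\times\mu)$; functions equal a.e. are identified. Cut norm: $\|F\|_\square:=\sup_{T,U}|\int_{T\times U}F\,d\mu\,d\mu|$ over measurable $T,U\subseteq S$. A set $\mathcal A$ of integrable functions is uniformly integrable if (UI1) $\sup_{F\in\mathcal A}\int|F|<\infty$ and (UI2) $\sup_{F\in\mathcal A}\int_{|F|>B}|F|\to0$ as $B\to\infty$. *)

theory Defs
  imports "HOL-Analysis.Analysis"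
begin

text \<open>A graphon on (S,mu): a symmetric integrable real function on S x S
  (symmetry up to null sets, since functions equal a.e. are identified).\<close>
definition graphon :: "'a measure \<Rightarrow> ('a \<times> 'a \<Rightarrow> real) \<Rightarrow> bool" where
  "graphon M W \<longleftrightarrow> integrable (M \<Otimes>\<^sub>M M) W \<and>
     (AE z in M \<Otimes>\<^sub>M M. W (snd z, fst z) = W z)"

definition cut_norm :: "'a measure \<Rightarrow> ('a \<times> 'a \<Rightarrow> real) \<Rightarrow> real" where
  "cut_norm M F = (SUP TU \<in> sets M \<times> sets M.
      \<bar>LINT z:(fst TU \<times> snd TU)|(M \<Otimes>\<^sub>M M). F z\<bar>)"

definition unif_integrable :: "'a measure \<Rightarrow> ('a \<times> 'a \<Rightarrow> real) set \<Rightarrow> bool" where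
  "unif_integrable M A \<longleftrightarrow>
     (\<exists>C. \<forall>F\<in>A. (LINT z|(M \<Otimes>\<^sub>M M). \<bar>F z\<bar>) \<le> C) \<and>
     (\<forall>e>0. \<exists>B0. \<forall>B\<ge>B0. \<forall>F\<in>A.
        (LINT z:{z \<in> space (M \<Otimes>\<^sub>M M). \<bar>F z\<bar> > B}|(M \<Otimes>\<^sub>M M). \<bar>F z\<bar>) \<le> e)"

end

theory Submission
  imports Defs
begin

text \<open>Cut-Cauchy sequences have convergent integrals over every rectangle \<open>T \<times> U\<close>.
  Exhaust \<open>S \<times> S\<close> by squares \<open>A\<^sub>k \<times> A\<^sub>k\<close> of finite measure. Uniform integrability gives
  uniform absolute continuity, which lets setwise convergence pass from rectangles to all
  measurable subsets of a square (a Dynkin argument) and makes the limit set function countably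
  additive. Its positive and negative variations are finite measures absolutely continuous with
  respect to \<open>\<mu> \<times> \<mu>\<close>, so Radon-Nikodym yields an integrable \<open>V\<close> whose rectangle integrals
  are the limits. Averaging \<open>V\<close> with its reflection gives a graphon with the same rectangle
  integrals, and the Cauchy property upgrades rectangle-wise convergence to cut-norm convergence.\<close>

lemma ennreal_add_le: "ennreal (a + b) \<le> ennreal a + ennreal b"
  by (auto simp: ennreal_plus_if intro!: ennreal_leI)

lemma ennreal_sum_le: "ennreal (sum f I) \<le> (\<Sum>i\<in>I. ennreal (f i))"
proof (induction I rule: infinite_finite_induct)
  case (insert i I)
  have "ennreal (sum f (insert i I)) \<le> ennreal (f i) + ennreal (sum f I)"
    using insert.hyps by (simp add: ennreal_add_le)
  also have "\<dots> \<le> ennreal (f i) + (\<Sum>i\<in>I. ennreal (f i))"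
    using insert.IH by (rule add_left_mono)
  finally show ?case using insert.hyps by simp
qed simp_all

lemma ennreal_le_suminf_if_sums:
  assumes "f sums s"
  shows "ennreal s \<le> (\<Sum>i. ennreal (f i))"
proof (rule LIMSEQ_le_const2)
  show "(\<lambda>n. ennreal (\<Sum>i<n. f i)) \<longlonglongrightarrow> ennreal s"
    using assms unfolding sums_def by (rule tendsto_ennrealI)
  show "\<exists>N. \<forall>n\<ge>N. ennreal (\<Sum>i<n. f i) \<le> (\<Sum>i. ennreal (f i))"
    by (intro exI allI impI order_trans[OF ennreal_sum_le sum_le_suminf]) auto
qed

lemma integrable_imp_set_integrable:
  fixes g :: "'b \<Rightarrow> 'c::{banach, second_countable_topology}"
  shows "integrable N g \<Longrightarrow> A \<in> sets N \<Longrightarrow> set_integrable N A g"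
  unfolding set_integrable_def by (rule integrable_mult_indicator)

lemma abs_set_integral_le:
  fixes g :: "'b \<Rightarrow> real"
  shows "\<bar>LINT z:E|N. g z\<bar> \<le> (LINT z:E|N. \<bar>g z\<bar>)"
  unfolding set_lebesgue_integral_def
  using integral_abs_bound[of N "\<lambda>z. indicator E z *\<^sub>R g z"] by (simp add: abs_mult)

lemma set_integral_abs_le_integral_abs:
  fixes g :: "'b \<Rightarrow> real"
  assumes "integrable N g" "E \<in> sets N"
  shows "(LINT z:E|N. \<bar>g z\<bar>) \<le> (\<integral>z. \<bar>g z\<bar> \<partial>N)"
  unfolding set_lebesgue_integral_def
  using assms by (intro integral_mono integrable_abs integrable_mult_indicator)
    (auto split: split_indicator)

lemma set_integral_Diff:
  fixes g :: "'b \<Rightarrow> real"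
  assumes "integrable N g" "A \<in> sets N" "B \<in> sets N" "B \<subseteq> A"
  shows "(LINT z:A - B|N. g z) = (LINT z:A|N. g z) - (LINT z:B|N. g z)"
proof -
  have "(LINT z:(A - B) \<union> B|N. g z) = (LINT z:A - B|N. g z) + (LINT z:B|N. g z)"
    using assms by (intro set_integral_Un integrable_imp_set_integrable) auto
  moreover have "(A - B) \<union> B = A"
    using assms(4) by auto
  ultimately show ?thesis
    by simp
qed

lemma set_integral_Union_split:
  fixes g :: "'b \<Rightarrow> real" and X :: "nat \<Rightarrow> 'b set"
  assumes g: "integrable N g" and X: "range X \<subseteq> sets N" "disjoint_family X"
  shows "(LINT z:(\<Union>i. X i)|N. g z)
    = (\<Sum>i<J. LINT z:X i|N. g z) + (LINT z:(\<Union>i\<in>{J..}. X i)|N. g z)"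
proof -
  have X_sets[measurable]: "X i \<in> sets N" for i
    using X(1) by auto
  have "X i \<inter> X j = {}" if "i < J" "J \<le> j" for i j
  proof -
    have "i \<noteq> j"
      using that by linarith
    then show ?thesis
      using X(2) by (simp add: disjoint_family_on_def)
  qed
  then have disjoint: "(\<Union>i<J. X i) \<inter> (\<Union>i\<in>{J..}. X i) = {}"
    by fastforce
  have "{..<J} \<union> {J..} = UNIV"
    by auto
  then have "(\<Union>i. X i) = (\<Union>i<J. X i) \<union> (\<Union>i\<in>{J..}. X i)"
    by (metis UN_Un)
  then have "(LINT z:(\<Union>i. X i)|N. g z) = (LINT z:(\<Union>i<J. X i)|N. g z) + (LINT z:(\<Union>i\<in>{J..}. X i)|N. g z)"
    using disjoint by (simp add: set_integral_Un integrable_imp_set_integrable[OF g])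
  also have "(LINT z:(\<Union>i<J. X i)|N. g z) = (\<Sum>i<J. LINT z:X i|N. g z)"
    using X(2) by (intro set_integral_finite_Union integrable_imp_set_integrable[OF g])
      (auto simp: disjoint_family_on_def)
  finally show ?thesis .
qed

lemma convergent_if_uniformly_approximable:
  fixes a :: "nat \<Rightarrow> real" and b :: "nat \<Rightarrow> nat \<Rightarrow> real"
  assumes conv: "\<And>J. convergent (b J)" and approx: "\<And>e. e > 0 \<Longrightarrow> \<exists>J. \<forall>n. \<bar>a n - b J n\<bar> \<le> e"
  shows "convergent a"
proof -
  have "Cauchy a"
  proof (rule CauchyI)
    fix e :: real assume "0 < e"
    then obtain J where J: "\<And>n. \<bar>a n - b J n\<bar> \<le> e / 3"
      using approx[of "e / 3"] by auto
    have "Cauchy (b J)"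
      using conv by (rule convergent_Cauchy)
    then obtain K where K: "\<And>m n. m \<ge> K \<Longrightarrow> n \<ge> K \<Longrightarrow> \<bar>b J m - b J n\<bar> < e / 3"
      using \<open>0 < e\<close> unfolding Cauchy_iff by (metis divide_pos_pos real_norm_def zero_less_numeral)
    show "\<exists>K. \<forall>m\<ge>K. \<forall>n\<ge>K. norm (a m - a n) < e"
    proof (intro exI[of _ K] allI impI)
      fix m n assume "m \<ge> K" "n \<ge> K"
      then have "\<bar>b J m - b J n\<bar> < e / 3"
        by (rule K)
      then show "norm (a m - a n) < e"
        using J[of m] J[of n] unfolding real_norm_def by linarith
    qed
  qed
  then show ?thesis
    by (simp add: Cauchy_convergent_iff)
qed

lemma limit_eq_if_uniformly_close:
  fixes a :: "nat \<Rightarrow> nat \<Rightarrow> real"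
  assumes a: "\<And>k. (\<lambda>n. a k n) \<longlonglongrightarrow> \<alpha> k" and c: "c \<longlonglongrightarrow> \<gamma>" and \<alpha>: "\<alpha> \<longlonglongrightarrow> \<beta>"
    and close: "\<And>e. e > 0 \<Longrightarrow> \<exists>K N. \<forall>k\<ge>K. \<forall>n\<ge>N. \<bar>a k n - c n\<bar> \<le> e"
  shows "\<beta> = \<gamma>"
proof -
  have "\<alpha> \<longlonglongrightarrow> \<gamma>"
  proof (rule LIMSEQ_I)
    fix e :: real assume "e > 0"
    then obtain K N where KN: "\<And>k n. k \<ge> K \<Longrightarrow> n \<ge> N \<Longrightarrow> \<bar>a k n - c n\<bar> \<le> e / 2"
      using close[of "e / 2"] by auto
    have small: "\<bar>\<alpha> k - \<gamma>\<bar> \<le> e / 2" if "k \<ge> K" for k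
      using KN[OF that] by (intro LIMSEQ_le_const2[OF tendsto_rabs[OF tendsto_diff[OF a c]]]) auto
    show "\<exists>K. \<forall>k\<ge>K. norm (\<alpha> k - \<gamma>) < e"
    proof (intro exI[of _ K] allI impI)
      fix k assume "k \<ge> K"
      with small[OF this] \<open>e > 0\<close> show "norm (\<alpha> k - \<gamma>) < e"
        by simp
    qed
  qed
  with \<alpha> show ?thesis
    by (rule LIMSEQ_unique)
qed

lemma (in sigma_finite_measure) real_density_of_finite_measure:
  assumes positive: "positive (sets M) \<nu>" and countably_additive: "countably_additive (sets M) \<nu>"
    and null: "\<And>E. E \<in> null_sets M \<Longrightarrow> \<nu> E = 0" and finite: "\<nu> (space M) < \<infinity>"
  shows "\<exists>g. integrable M g \<and> (\<forall>E\<in>sets M. (LINT x:E|M. g x) = enn2real (\<nu> E))"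
proof -
  define N where "N = measure_of (space M) (sets M) \<nu>"
  have sets_N: "sets N = sets M" and space_N: "space N = space M"
    unfolding N_def by simp_all
  have emeasure_N: "emeasure N E = \<nu> E" if "E \<in> sets M" for E
    unfolding N_def using sets.sigma_algebra_axioms positive countably_additive that
    by (rule emeasure_measure_of_sigma)
  interpret N: finite_measure N
    using finite by (intro finite_measureI) (simp add: space_N emeasure_N)
  have ac: "absolutely_continuous M N"
    unfolding absolutely_continuous_def
    by (auto simp: null_sets_def sets_N emeasure_N null)
  define g where "g = (\<lambda>x. enn2real (RN_deriv M N x))"
  have "integrable N (\<lambda>_. 1::real)" by simp
  then have "integrable M g"
    using RN_deriv_integrable[OF N.sigma_finite_measure_axioms ac sets_N, of "\<lambda>_. 1"]
    by (simp add: g_def)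
  moreover have "(LINT x:E|M. g x) = enn2real (\<nu> E)" if E: "E \<in> sets M" for E
  proof -
    have "(LINT x:E|M. g x) = (\<integral>x. enn2real (RN_deriv M N x) * indicator E x \<partial>M)"
      by (simp add: g_def set_lebesgue_integral_def mult.commute)
    also have "\<dots> = (\<integral>x. indicator E x \<partial>N)"
      using E by (intro RN_deriv_integral[OF N.sigma_finite_measure_axioms ac sets_N, symmetric]) simp
    also have "\<dots> = enn2real (\<nu> E)"
      using E by (simp add: sets_N measure_def emeasure_N)
    finally show ?thesis .
  qed
  ultimately show ?thesis by blast
qed

section \<open>Jordan decomposition of bounded signed premeasures\<close>

definition positive_variation :: "'b set set \<Rightarrow> ('b set \<Rightarrow> real) \<Rightarrow> 'b set \<Rightarrow> ennreal" where
  "positive_variation \<F> L E = (SUP F \<in> {F \<in> \<F>. F \<subseteq> E}. ennreal (L F))"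

locale bounded_signed_premeasure =
  fixes M :: "'b measure" and \<F> :: "'b set set" and L :: "'b set \<Rightarrow> real" and B :: real
  assumes subset_sets: "\<F> \<subseteq> sets M"
    and empty_mem: "{} \<in> \<F>"
    and Int_mem: "\<And>F E. F \<in> \<F> \<Longrightarrow> E \<in> sets M \<Longrightarrow> F \<inter> E \<in> \<F>"
    and Un_mem: "\<And>F G. F \<in> \<F> \<Longrightarrow> G \<in> \<F> \<Longrightarrow> F \<union> G \<in> \<F>"
    and additive: "\<And>F G. F \<in> \<F> \<Longrightarrow> G \<in> \<F> \<Longrightarrow> F \<inter> G = {} \<Longrightarrow> L (F \<union> G) = L F + L G"
    and countably_additive: "\<And>X. range X \<subseteq> \<F> \<Longrightarrow> disjoint_family X \<Longrightarrow> (\<Union>i. X i) \<in> \<F> \<Longrightarrow>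
      (\<lambda>i. L (X i)) sums L (\<Union>i. X i)"
    and bounded: "\<And>F. F \<in> \<F> \<Longrightarrow> \<bar>L F\<bar> \<le> B"
    and null: "\<And>F. F \<in> \<F> \<Longrightarrow> F \<in> null_sets M \<Longrightarrow> L F = 0"
begin

lemma L_empty: "L {} = 0"
  using additive[OF empty_mem empty_mem] by simp

lemma Diff_mem:
  assumes "F \<in> \<F>" "E \<in> sets M"
  shows "F - E \<in> \<F>"
proof -
  have "F \<subseteq> space M"
    using sets.sets_into_space[of F] subset_sets assms(1) by auto
  then have "F - E = F \<inter> (space M - E)"
    by auto
  then show ?thesis
    using Int_mem[OF assms(1)] assms(2) by simp
qed

lemma uminus: "bounded_signed_premeasure M \<F> (\<lambda>F. - L F) B"
  by unfold_locales (auto simp: subset_sets empty_mem Int_mem Un_mem additive countably_additive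
      sums_minus bounded null)

lemma le_positive_variation: "F \<in> \<F> \<Longrightarrow> F \<subseteq> E \<Longrightarrow> ennreal (L F) \<le> positive_variation \<F> L E"
  unfolding positive_variation_def by (intro SUP_upper) auto

lemma positive_variation_mono: "E \<subseteq> E' \<Longrightarrow> positive_variation \<F> L E \<le> positive_variation \<F> L E'"
  unfolding positive_variation_def by (intro SUP_subset_mono) auto

lemma positive_variation_le_bound: "positive_variation \<F> L E \<le> ennreal B"
  unfolding positive_variation_def
proof (rule SUP_least)
  fix F assume "F \<in> {F \<in> \<F>. F \<subseteq> E}"
  then have "L F \<le> B"
    using bounded[of F] by (simp add: abs_le_iff)
  then show "ennreal (L F) \<le> ennreal B"
    by (rule ennreal_leI)
qed

lemma positive_variation_superadditive:
  assumes "X \<inter> Y = {}"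
  shows "positive_variation \<F> L X + positive_variation \<F> L Y \<le> positive_variation \<F> L (X \<union> Y)"
proof -
  have nonempty: "{F \<in> \<F>. F \<subseteq> E} \<noteq> {}" for E
    using empty_mem by auto
  have "ennreal (L F) + ennreal (L G) \<le> positive_variation \<F> L (X \<union> Y)"
    if F: "F \<in> \<F>" "F \<subseteq> X" and G: "G \<in> \<F>" "G \<subseteq> Y" for F G
  proof -
    \<comment> \<open>Discarding a set of negative mass does not change its contribution.\<close>
    define F' where "F' = (if L F \<ge> 0 then F else {})"
    define G' where "G' = (if L G \<ge> 0 then G else {})"
    have F': "F' \<in> \<F>" "F' \<subseteq> X" "L F' \<ge> 0" "ennreal (L F) = ennreal (L F')"
      using F empty_mem by (auto simp: F'_def L_empty ennreal_neg)
    have G': "G' \<in> \<F>" "G' \<subseteq> Y" "L G' \<ge> 0" "ennreal (L G) = ennreal (L G')"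
      using G empty_mem by (auto simp: G'_def L_empty ennreal_neg)
    have "ennreal (L F) + ennreal (L G) = ennreal (L (F' \<union> G'))"
      using F' G' assms by (subst additive) (auto simp: ennreal_plus)
    also have "\<dots> \<le> positive_variation \<F> L (X \<union> Y)"
      using F' G' by (intro le_positive_variation Un_mem) auto
    finally show ?thesis .
  qed
  then show ?thesis
    unfolding positive_variation_def[of _ _ X] positive_variation_def[of _ _ Y]
    by (simp add: ennreal_SUP_add_left[OF nonempty, symmetric] ennreal_SUP_add_right[OF nonempty])
      (intro SUP_least; auto)
qed

lemma positive_variation_countably_additive:
  "countably_additive (sets M) (positive_variation \<F> L)"
  unfolding countably_additive_def
proof (intro allI impI antisym)
  fix A :: "nat \<Rightarrow> 'b set"
  assume A: "range A \<subseteq> sets M" "disjoint_family A" "\<Union> (range A) \<in> sets M"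
  have partial_sum: "(\<Sum>i<n. positive_variation \<F> L (A i)) \<le> positive_variation \<F> L (\<Union>i<n. A i)" for n
  proof (induction n)
    case (Suc n)
    have "(\<Sum>i<Suc n. positive_variation \<F> L (A i))
        \<le> positive_variation \<F> L (\<Union>i<n. A i) + positive_variation \<F> L (A n)"
      using Suc by (simp add: add_right_mono)
    also have "\<dots> \<le> positive_variation \<F> L ((\<Union>i<n. A i) \<union> A n)"
    proof (intro positive_variation_superadditive)
      have "A i \<inter> A n = {}" if "i < n" for i
        using A(2) that by (simp add: disjoint_family_on_def)
      then show "(\<Union>i<n. A i) \<inter> A n = {}"
        by blast
    qed
    also have "(\<Union>i<n. A i) \<union> A n = (\<Union>i<Suc n. A i)"
      by (simp add: lessThan_Suc sup_commute)
    finally show ?case .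
  qed simp
  have "(\<Sum>i<n. positive_variation \<F> L (A i)) \<le> positive_variation \<F> L (\<Union> (range A))" for n
    by (rule order_trans[OF partial_sum positive_variation_mono]) blast
  then show "(\<Sum>i. positive_variation \<F> L (A i)) \<le> positive_variation \<F> L (\<Union> (range A))"
    unfolding suminf_eq_SUP by (rule SUP_least)
  show "positive_variation \<F> L (\<Union> (range A)) \<le> (\<Sum>i. positive_variation \<F> L (A i))"
    unfolding positive_variation_def[of _ _ "\<Union> (range A)"]
  proof (rule SUP_least)
    fix F assume F: "F \<in> {F \<in> \<F>. F \<subseteq> \<Union> (range A)}"
    have pieces: "range (\<lambda>i. F \<inter> A i) \<subseteq> \<F>"
      using F A(1) Int_mem by auto
    have "disjoint_family (\<lambda>i. F \<inter> A i)"
      using A(2) by (auto simp: disjoint_family_on_def)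
    moreover have "(\<Union>i. F \<inter> A i) = F"
      using F by auto
    ultimately have "(\<lambda>i. L (F \<inter> A i)) sums L F"
      using countably_additive[OF pieces] F by simp
    then have "ennreal (L F) \<le> (\<Sum>i. ennreal (L (F \<inter> A i)))"
      by (rule ennreal_le_suminf_if_sums)
    also have "\<dots> \<le> (\<Sum>i. positive_variation \<F> L (A i))"
    proof (rule suminf_le)
      show "ennreal (L (F \<inter> A i)) \<le> positive_variation \<F> L (A i)" for i
        using pieces by (intro le_positive_variation) auto
    qed auto
    finally show "ennreal (L F) \<le> (\<Sum>i. positive_variation \<F> L (A i))" .
  qed
qed

lemma positive_variation_null:
  assumes "E \<in> null_sets M"
  shows "positive_variation \<F> L E = 0"
proof -
  have "ennreal (L F) = 0" if "F \<in> \<F>" "F \<subseteq> E" for F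
  proof -
    have "F \<in> null_sets M"
      using null_sets_subset[OF assms subsetD[OF subset_sets that(1)] that(2)] .
    then show ?thesis
      using null that(1) by simp
  qed
  then show ?thesis
    unfolding positive_variation_def by (intro antisym SUP_least) auto
qed

lemma le_enn2real_positive_variation:
  assumes "F \<in> \<F>" "F \<subseteq> E"
  shows "L F \<le> enn2real (positive_variation \<F> L E)"
proof -
  have finite: "positive_variation \<F> L E < top"
    using positive_variation_le_bound[of E] by (rule le_less_trans) simp
  have "L F \<le> enn2real (ennreal (L F))"
    by (cases "0 \<le> L F") (auto simp: ennreal_neg)
  also have "\<dots> \<le> enn2real (positive_variation \<F> L E)"
    using assms finite by (intro enn2real_mono le_positive_variation)
  finally show ?thesis .
qed

lemma enn2real_positive_variation_le:
  assumes "0 \<le> c" "\<And>F. F \<in> \<F> \<Longrightarrow> F \<subseteq> E \<Longrightarrow> L F \<le> c"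
  shows "enn2real (positive_variation \<F> L E) \<le> c"
  using assms unfolding positive_variation_def by (intro enn2real_leI SUP_least ennreal_leI) auto

lemma Jordan_decomposition:
  assumes F: "F \<in> \<F>"
  shows "L F = enn2real (positive_variation \<F> L F) - enn2real (positive_variation \<F> (\<lambda>F. - L F) F)"
proof -
  interpret neg: bounded_signed_premeasure M \<F> "\<lambda>F. - L F" B
    by (rule uminus)
  define p where "p = enn2real (positive_variation \<F> L F)"
  define m where "m = enn2real (positive_variation \<F> (\<lambda>F. - L F) F)"
  have split: "L F = L G + L (F - G)" if "G \<in> \<F>" "G \<subseteq> F" for G
    using that F subset_sets additive[of G "F - G"] Diff_mem[of F G] by (auto simp: Un_absorb1)
  have "p \<le> L F + m"
    unfolding p_def
  proof (rule enn2real_positive_variation_le)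
    show "0 \<le> L F + m" using neg.le_enn2real_positive_variation[OF F order_refl] by (simp add: m_def)
    show "L G \<le> L F + m" if "G \<in> \<F>" "G \<subseteq> F" for G
      using split[OF that] neg.le_enn2real_positive_variation[of "F - G" F] Diff_mem[of F G] that F subset_sets
      by (auto simp: m_def)
  qed
  moreover have "m \<le> p - L F"
    unfolding m_def
  proof (rule neg.enn2real_positive_variation_le)
    show "0 \<le> p - L F" using le_enn2real_positive_variation[OF F order_refl] by (simp add: p_def)
    show "- L G \<le> p - L F" if "G \<in> \<F>" "G \<subseteq> F" for G
      using split[OF that] le_enn2real_positive_variation[of "F - G" F] Diff_mem[of F G] that F subset_sets
      by (auto simp: p_def)
  qed
  ultimately show ?thesis by (simp add: p_def m_def)
qed

lemma positive_variation_density: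
  assumes "sigma_finite_measure M"
  shows "\<exists>g. integrable M g \<and> (\<forall>E\<in>sets M. (LINT x:E|M. g x) = enn2real (positive_variation \<F> L E))"
proof (rule sigma_finite_measure.real_density_of_finite_measure[OF assms])
  show "positive (sets M) (positive_variation \<F> L)"
    unfolding positive_def positive_variation_def using empty_mem by (simp add: L_empty)
  show "positive_variation \<F> L (space M) < \<infinity>"
    using positive_variation_le_bound by (rule le_less_trans) simp
qed (simp_all add: positive_variation_countably_additive positive_variation_null)

theorem signed_density:
  assumes "sigma_finite_measure M"
  shows "\<exists>g. integrable M g \<and> (\<forall>F\<in>\<F>. (LINT x:F|M. g x) = L F)"
proof -
  interpret neg: bounded_signed_premeasure M \<F> "\<lambda>F. - L F" B
    by (rule uminus)
  obtain g_pos where g_pos: "integrable M g_pos"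
    "\<And>E. E \<in> sets M \<Longrightarrow> (LINT x:E|M. g_pos x) = enn2real (positive_variation \<F> L E)"
    using positive_variation_density[OF assms] by blast
  obtain g_neg where g_neg: "integrable M g_neg"
    "\<And>E. E \<in> sets M \<Longrightarrow> (LINT x:E|M. g_neg x) = enn2real (positive_variation \<F> (\<lambda>F. - L F) E)"
    using neg.positive_variation_density[OF assms] by blast
  have "(LINT x:F|M. g_pos x - g_neg x) = L F" if F: "F \<in> \<F>" for F
  proof -
    have Fs: "F \<in> sets M"
      using F subset_sets by auto
    have parts: "set_integrable M F g_pos" "set_integrable M F g_neg"
      using Fs g_pos(1) g_neg(1) by (simp_all add: integrable_imp_set_integrable)
    then show ?thesis
      using set_integral_diff(2)[OF parts] g_pos(2)[OF Fs] g_neg(2)[OF Fs] Jordan_decomposition[OF F]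
      by simp
  qed
  then show ?thesis using g_pos(1) g_neg(1) by blast
qed

end

section \<open>Uniformly integrable sequences\<close>

locale uniformly_integrable_seq =
  fixes N :: "'b measure" and f :: "nat \<Rightarrow> 'b \<Rightarrow> real" and C :: real
  assumes integrable [simp]: "\<And>n. integrable N (f n)"
    and L1_bounded: "\<And>n. (\<integral>z. \<bar>f n z\<bar> \<partial>N) \<le> C"
    and uniform_tails: "\<And>e. e > 0 \<Longrightarrow>
      \<exists>B0. \<forall>B\<ge>B0. \<forall>n. (LINT z:{z \<in> space N. B < \<bar>f n z\<bar>}|N. \<bar>f n z\<bar>) \<le> e"
begin

lemma measurable_f [measurable]: "f n \<in> borel_measurable N"
  using integrable by blast

lemma uniformly_absolutely_continuous:
  assumes "e > 0"
  obtains d where "d > 0"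
    "\<And>E n. E \<in> sets N \<Longrightarrow> emeasure N E < ennreal d \<Longrightarrow> (LINT z:E|N. \<bar>f n z\<bar>) \<le> e"
proof -
  obtain B0 where B0: "\<And>B n. B \<ge> B0 \<Longrightarrow> (LINT z:{z \<in> space N. B < \<bar>f n z\<bar>}|N. \<bar>f n z\<bar>) \<le> e / 2"
    using uniform_tails[of "e / 2"] assms by auto
  define B where "B = max B0 1"
  define d where "d = e / (2 * B)"
  have "B > 0" "d > 0"
    using assms by (auto simp: B_def d_def)
  show thesis
  proof (rule that[OF \<open>d > 0\<close>])
    fix E n assume E: "E \<in> sets N" "emeasure N E < ennreal d"
    define G where "G = {z \<in> space N. B < \<bar>f n z\<bar>}"
    have G_sets[measurable]: "G \<in> sets N"
      unfolding G_def by measurable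
    have "emeasure N E = ennreal (measure N E)"
      using E(2) by (intro emeasure_eq_ennreal_measure) (auto simp: top_unique)
    then have measure_E: "measure N E < d" "integrable N (indicator E :: 'b \<Rightarrow> real)"
      using E \<open>d > 0\<close> by (auto simp: ennreal_less_iff integrable_indicator_iff)
    \<comment> \<open>Split at height \<open>B\<close>: above it the tail bound applies, below it the measure of \<open>E\<close> does.\<close>
    have integrable_G: "integrable N (\<lambda>z. indicator G z * \<bar>f n z\<bar>)"
      using integrable_mult_indicator[OF G_sets integrable_abs[OF integrable[of n]]] by simp
    have integrable_E: "integrable N (\<lambda>z. indicator E z * \<bar>f n z\<bar>)"
      using integrable_mult_indicator[OF E(1) integrable_abs[OF integrable[of n]]] by simp
    have "(LINT z:E|N. \<bar>f n z\<bar>) \<le> (\<integral>z. indicator G z * \<bar>f n z\<bar> + B * indicator E z \<partial>N)"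
      unfolding set_lebesgue_integral_def
      using integrable_G integrable_E measure_E(2) \<open>B > 0\<close>
      by (intro integral_mono) (auto simp: G_def split: split_indicator)
    also have "\<dots> = (LINT z:G|N. \<bar>f n z\<bar>) + B * measure N E"
      using integrable_G measure_E(2) E(1)
      by (subst Bochner_Integration.integral_add) (auto simp: set_lebesgue_integral_def)
    also have "\<dots> \<le> e / 2 + B * d"
      using B0[of B n] measure_E \<open>B > 0\<close> by (intro add_mono) (auto simp: B_def G_def)
    also have "\<dots> = e"
      using \<open>B > 0\<close> by (simp add: d_def)
    finally show "(LINT z:E|N. \<bar>f n z\<bar>) \<le> e" .
  qed
qed

lemma uniformly_small_on_decseq:
  fixes X :: "nat \<Rightarrow> 'b set"
  assumes X: "range X \<subseteq> sets N" "decseq X" "(\<Inter>i. X i) = {}" "emeasure N (X 0) < \<infinity>"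
    and "e > 0"
  shows "\<exists>J. \<forall>j\<ge>J. \<forall>n. \<bar>LINT z:X j|N. f n z\<bar> \<le> e"
proof -
  obtain d where "d > 0"
    and d: "\<And>E n. E \<in> sets N \<Longrightarrow> emeasure N E < ennreal d \<Longrightarrow> (LINT z:E|N. \<bar>f n z\<bar>) \<le> e"
    using uniformly_absolutely_continuous[OF \<open>e > 0\<close>] by blast
  have "emeasure N (X j) \<le> emeasure N (X 0)" for j
    using X(1,2) by (intro emeasure_mono) (auto simp: decseq_def)
  then have finite: "emeasure N (X j) < \<infinity>" for j
    using X(4) by (rule le_less_trans)
  then have "(\<lambda>j. emeasure N (X j)) \<longlonglongrightarrow> emeasure N (\<Inter>j. X j)"
    using X by (intro Lim_emeasure_decseq) (auto simp: less_top)
  then have "eventually (\<lambda>j. emeasure N (X j) < ennreal d) sequentially"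
    using X(3) \<open>d > 0\<close> by (intro order_tendstoD(2)) auto
  then obtain J where "\<And>j. j \<ge> J \<Longrightarrow> emeasure N (X j) < ennreal d"
    unfolding eventually_sequentially by blast
  then have "\<bar>LINT z:X j|N. f n z\<bar> \<le> e" if "j \<ge> J" for j n
    using abs_set_integral_le[of N "X j" "f n"] d[of "X j" n] X(1) that by fastforce
  then show ?thesis
    by blast
qed

lemma uniformly_small_tails:
  fixes X :: "nat \<Rightarrow> 'b set"
  assumes X: "range X \<subseteq> sets N" "disjoint_family X" "emeasure N (\<Union>i. X i) < \<infinity>"
    and "e > 0"
  shows "\<exists>J. \<forall>j\<ge>J. \<forall>n. \<bar>LINT z:(\<Union>i\<in>{j..}. X i)|N. f n z\<bar> \<le> e"
proof (rule uniformly_small_on_decseq[where X = "\<lambda>j. \<Union>i\<in>{j..}. X i", OF _ _ _ _ \<open>e > 0\<close>])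
  show "range (\<lambda>j. \<Union>i\<in>{j..}. X i) \<subseteq> sets N"
    using X(1) by auto
  show "decseq (\<lambda>j. \<Union>i\<in>{j..}. X i)"
    unfolding decseq_def by (intro allI impI UN_mono) auto
  show "(\<Inter>j. \<Union>i\<in>{j..}. X i) = {}"
  proof (rule equals0I)
    fix z assume "z \<in> (\<Inter>j. \<Union>i\<in>{j..}. X i)"
    then obtain i i' where "z \<in> X i" "z \<in> X i'" "Suc i \<le> i'"
      by blast
    moreover from this have "i \<noteq> i'"
      by simp
    ultimately show False
      using X(2) unfolding disjoint_family_on_def by blast
  qed
  show "emeasure N (\<Union>i\<in>{0..}. X i) < \<infinity>"
    using X(3) by simp
qed

lemma convergent_set_integrals_Int:
  assumes sets_N: "sets N = sigma_sets (space N) G" and G: "Int_stable G" "G \<subseteq> Pow (space N)"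
    and Q: "Q \<in> sets N" "emeasure N Q < \<infinity>"
    and convergent_G: "\<And>E. E \<in> G \<Longrightarrow> convergent (\<lambda>n. LINT z:E \<inter> Q|N. f n z)"
    and convergent_Q: "convergent (\<lambda>n. LINT z:Q|N. f n z)"
    and E: "E \<in> sets N"
  shows "convergent (\<lambda>n. LINT z:E \<inter> Q|N. f n z)"
  using G E[unfolded sets_N]
proof (induction rule: sigma_sets_induct_disjoint)
  case (basic A)
  then show ?case by (rule convergent_G)
next
  case empty
  then show ?case by (simp add: set_lebesgue_integral_def convergent_const)
next
  case (compl A)
  then have "A \<inter> Q \<in> sets N"
    using Q(1) sets_N by auto
  moreover have "(space N - A) \<inter> Q = Q - A \<inter> Q"
    using sets.sets_into_space[OF Q(1)] by auto
  ultimately show ?case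
    using compl.IH convergent_Q Q(1) by (simp add: set_integral_Diff convergent_diff)
next
  case (union A)
  define X where "X i = A i \<inter> Q" for i
  have "A i \<in> sets N" for i
    using union.hyps(2) sets_N by auto
  then have X: "range X \<subseteq> sets N" "disjoint_family X"
    using Q(1) union.hyps(1) by (auto simp: X_def disjoint_family_on_def)
  have "emeasure N (\<Union>i. X i) \<le> emeasure N Q"
    using X(1) Q(1) by (intro emeasure_mono) (auto simp: X_def)
  then have finite: "emeasure N (\<Union>i. X i) < \<infinity>"
    using Q(2) by (rule le_less_trans)
  have "convergent (\<lambda>n. LINT z:(\<Union>i. X i)|N. f n z)"
  proof (rule convergent_if_uniformly_approximable)
    show "convergent (\<lambda>n. \<Sum>i<J. LINT z:X i|N. f n z)" for J
      using union.IH by (intro convergent_sum) (simp add: X_def)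
    show "\<exists>J. \<forall>n. \<bar>(LINT z:(\<Union>i. X i)|N. f n z) - (\<Sum>i<J. LINT z:X i|N. f n z)\<bar> \<le> e"
      if e: "e > 0" for e
    proof -
      obtain J where "\<forall>n. \<bar>LINT z:(\<Union>i\<in>{J..}. X i)|N. f n z\<bar> \<le> e"
        using uniformly_small_tails[OF X finite e] by blast
      then show ?thesis
        by (intro exI[of _ J]) (simp add: set_integral_Union_split[OF integrable X, where J = J])
    qed
  qed
  moreover have "(\<Union>i. A i) \<inter> Q = (\<Union>i. X i)"
    by (auto simp: X_def)
  ultimately show ?case
    by simp
qed

end

definition (in uniformly_integrable_seq) set_limit :: "'b set \<Rightarrow> real" where
  "set_limit E = lim (\<lambda>n. LINT z:E|N. f n z)"

locale setwise_convergent_ui_seq = uniformly_integrable_seq N f C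
  for N :: "'b measure" and f C +
  fixes Q :: "nat \<Rightarrow> 'b set"
  assumes Q_sets [measurable]: "\<And>k. Q k \<in> sets N"
    and Q_finite: "\<And>k. emeasure N (Q k) < \<infinity>"
    and Q_incseq: "incseq Q"
    and convergent_Int_Q: "\<And>k E. E \<in> sets N \<Longrightarrow> convergent (\<lambda>n. LINT z:E \<inter> Q k|N. f n z)"
begin

text \<open>Uniform integrability gives no control outside sets of finite measure, so the limit set
  function is only considered on subsets of some \<open>Q k\<close>.\<close>

abbreviation bounded_sets :: "'b set set" where
  "bounded_sets \<equiv> {E \<in> sets N. \<exists>k. E \<subseteq> Q k}"

lemma tendsto_set_limit:
  assumes "E \<in> sets N" "E \<subseteq> Q k"
  shows "(\<lambda>n. LINT z:E|N. f n z) \<longlonglongrightarrow> set_limit E"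
proof -
  have "E \<inter> Q k = E"
    using assms(2) by auto
  then show ?thesis
    using convergent_Int_Q[OF assms(1), of k] by (simp add: set_limit_def convergent_LIMSEQ_iff)
qed

lemma bounded_sets_common_bound:
  assumes "F \<in> bounded_sets" "G \<in> bounded_sets"
  obtains k where "F \<subseteq> Q k" "G \<subseteq> Q k"
proof -
  obtain k l where "F \<subseteq> Q k" "G \<subseteq> Q l"
    using assms by auto
  moreover have "Q k \<subseteq> Q (max k l)" "Q l \<subseteq> Q (max k l)"
    using Q_incseq by (auto simp: incseq_def)
  ultimately show thesis
    using that[of "max k l"] by blast
qed

lemma set_limit_Un:
  assumes "F \<in> bounded_sets" "G \<in> bounded_sets" "F \<inter> G = {}"
  shows "set_limit (F \<union> G) = set_limit F + set_limit G"
proof -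
  obtain k where k: "F \<subseteq> Q k" "G \<subseteq> Q k"
    using bounded_sets_common_bound[OF assms(1,2)] .
  have "(\<lambda>n. LINT z:F \<union> G|N. f n z) = (\<lambda>n. (LINT z:F|N. f n z) + (LINT z:G|N. f n z))"
    using assms by (intro ext set_integral_Un integrable_imp_set_integrable) auto
  moreover have "(\<lambda>n. LINT z:F \<union> G|N. f n z) \<longlonglongrightarrow> set_limit (F \<union> G)"
    using assms k by (intro tendsto_set_limit[of _ k]) auto
  moreover have "(\<lambda>n. (LINT z:F|N. f n z) + (LINT z:G|N. f n z)) \<longlonglongrightarrow> set_limit F + set_limit G"
    using assms k by (intro tendsto_add tendsto_set_limit) auto
  ultimately show ?thesis
    using LIMSEQ_unique by metis
qed

lemma set_limit_sums:
  assumes X: "range X \<subseteq> bounded_sets" "disjoint_family X" "(\<Union>i. X i) \<in> bounded_sets"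
  shows "(\<lambda>i. set_limit (X i)) sums set_limit (\<Union>i. X i)"
proof -
  obtain k where k: "(\<Union>i. X i) \<subseteq> Q k"
    using X(3) by auto
  have X_sets: "range X \<subseteq> sets N"
    using X(1) by auto
  have tail_sets: "(\<Union>i\<in>{j..}. X i) \<in> sets N" for j
    using X_sets by auto
  have tails: "(\<lambda>n. LINT z:(\<Union>i\<in>{j..}. X i)|N. f n z) \<longlonglongrightarrow> set_limit (\<Union>i\<in>{j..}. X i)" for j
    using k tail_sets by (intro tendsto_set_limit[of _ k]) auto
  have split: "set_limit (\<Union>i. X i) = (\<Sum>i<j. set_limit (X i)) + set_limit (\<Union>i\<in>{j..}. X i)" for j
  proof (rule LIMSEQ_unique)
    show "(\<lambda>n. LINT z:(\<Union>i. X i)|N. f n z) \<longlonglongrightarrow> set_limit (\<Union>i. X i)"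
      using X(3) by (auto intro: tendsto_set_limit)
    show "(\<lambda>n. LINT z:(\<Union>i. X i)|N. f n z)
        \<longlonglongrightarrow> (\<Sum>i<j. set_limit (X i)) + set_limit (\<Union>i\<in>{j..}. X i)"
      unfolding set_integral_Union_split[OF integrable X_sets X(2), where J = j]
      using X(1) by (intro tendsto_add tendsto_sum tails) (auto intro: tendsto_set_limit)
  qed
  have finite: "emeasure N (\<Union>i. X i) < \<infinity>"
    using emeasure_mono[OF k Q_sets] Q_finite[of k] by (rule le_less_trans)
  show ?thesis
    unfolding sums_def
  proof (rule LIMSEQ_I)
    fix e :: real assume "e > 0"
    then obtain J where J: "\<And>j n. j \<ge> J \<Longrightarrow> \<bar>LINT z:(\<Union>i\<in>{j..}. X i)|N. f n z\<bar> \<le> e / 2"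
      using uniformly_small_tails[OF X_sets X(2) finite, of "e / 2"] by auto
    have small: "\<bar>set_limit (\<Union>i\<in>{j..}. X i)\<bar> \<le> e / 2" if "j \<ge> J" for j
      using J[OF that] by (intro LIMSEQ_le_const2[OF tendsto_rabs[OF tails]]) auto
    show "\<exists>J. \<forall>j\<ge>J. norm ((\<Sum>i<j. set_limit (X i)) - set_limit (\<Union>i. X i)) < e"
    proof (intro exI[of _ J] allI impI)
      fix j assume "j \<ge> J"
      then show "norm ((\<Sum>i<j. set_limit (X i)) - set_limit (\<Union>i. X i)) < e"
        using small[of j] split[of j] \<open>e > 0\<close> by simp
    qed
  qed
qed

lemma abs_set_limit_le:
  assumes "F \<in> bounded_sets"
  shows "\<bar>set_limit F\<bar> \<le> C"
proof (rule LIMSEQ_le_const2)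
  obtain k where "F \<in> sets N" "F \<subseteq> Q k"
    using assms by blast
  then show "(\<lambda>n. \<bar>LINT z:F|N. f n z\<bar>) \<longlonglongrightarrow> \<bar>set_limit F\<bar>"
    by (intro tendsto_rabs tendsto_set_limit)
  have "\<bar>LINT z:F|N. f n z\<bar> \<le> C" for n
    using abs_set_integral_le[of N F "f n"] set_integral_abs_le_integral_abs[of N "f n" F] L1_bounded[of n] assms
    by auto
  then show "\<exists>K. \<forall>n\<ge>K. \<bar>LINT z:F|N. f n z\<bar> \<le> C"
    by blast
qed

lemma set_limit_null:
  assumes "F \<in> bounded_sets" "F \<in> null_sets N"
  shows "set_limit F = 0"
proof -
  have "(LINT z:F|N. f n z) = 0" for n
  proof -
    have "AE z in N. indicator F z *\<^sub>R f n z = 0"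
      using AE_not_in[OF assms(2)] by eventually_elim simp
    then show ?thesis
      unfolding set_lebesgue_integral_def by (rule integral_eq_zero_AE)
  qed
  then show ?thesis
    by (simp add: set_limit_def)
qed

lemma bounded_signed_premeasure_set_limit: "bounded_signed_premeasure N bounded_sets set_limit C"
proof
  show "bounded_sets \<subseteq> sets N"
    by auto
  show "{} \<in> bounded_sets"
    by auto
  show "F \<inter> E \<in> bounded_sets" if F: "F \<in> bounded_sets" and E: "E \<in> sets N" for F E
  proof -
    obtain k where "F \<in> sets N" "F \<subseteq> Q k"
      using F by blast
    then show ?thesis
      using E by auto
  qed
  show "F \<union> G \<in> bounded_sets" if FG: "F \<in> bounded_sets" "G \<in> bounded_sets" for F G
  proof -
    obtain k where "F \<subseteq> Q k" "G \<subseteq> Q k"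
      using bounded_sets_common_bound[OF FG] .
    then show ?thesis
      using FG by auto
  qed
qed (fact set_limit_Un set_limit_sums abs_set_limit_le set_limit_null)+

theorem exists_limit_density:
  assumes "sigma_finite_measure N"
  obtains V where "integrable N V"
    "\<And>k E. E \<in> sets N \<Longrightarrow> (\<lambda>n. LINT z:E \<inter> Q k|N. f n z) \<longlonglongrightarrow> (LINT z:E \<inter> Q k|N. V z)"
proof -
  interpret bounded_signed_premeasure N bounded_sets set_limit C
    by (rule bounded_signed_premeasure_set_limit)
  obtain V where V: "integrable N V" "\<forall>F\<in>bounded_sets. (LINT z:F|N. V z) = set_limit F"
    using signed_density[OF assms] by (elim exE conjE)
  have "(\<lambda>n. LINT z:E \<inter> Q k|N. f n z) \<longlonglongrightarrow> (LINT z:E \<inter> Q k|N. V z)" if E: "E \<in> sets N" for k E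
  proof -
    have "E \<inter> Q k \<in> bounded_sets"
      using E by auto
    then show ?thesis
      using V(2) tendsto_set_limit[of "E \<inter> Q k" k] by simp
  qed
  with V(1) show thesis
    by (rule that)
qed

end

section \<open>Cut norm and graphons\<close>

definition cut_Cauchy :: "'a measure \<Rightarrow> (nat \<Rightarrow> 'a \<times> 'a \<Rightarrow> real) \<Rightarrow> bool" where
  "cut_Cauchy M W \<longleftrightarrow> (\<forall>e>0. \<exists>N. \<forall>m\<ge>N. \<forall>n\<ge>N. cut_norm M (\<lambda>z. W m z - W n z) < e)"

lemma abs_rectangle_integral_le_cut_norm:
  assumes F: "integrable (M \<Otimes>\<^sub>M M) F" and TU: "T \<in> sets M" "U \<in> sets M"
  shows "\<bar>LINT z:T \<times> U|(M \<Otimes>\<^sub>M M). F z\<bar> \<le> cut_norm M F"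
proof -
  have "\<bar>LINT z:fst TU \<times> snd TU|(M \<Otimes>\<^sub>M M). F z\<bar> \<le> (\<integral>z. \<bar>F z\<bar> \<partial>(M \<Otimes>\<^sub>M M))"
    if "TU \<in> sets M \<times> sets M" for TU
  proof -
    have "fst TU \<times> snd TU \<in> sets (M \<Otimes>\<^sub>M M)"
      using that by (auto simp: mem_Times_iff)
    then show ?thesis
      using abs_set_integral_le[of "M \<Otimes>\<^sub>M M" "fst TU \<times> snd TU" F]
        set_integral_abs_le_integral_abs[OF F] by (meson order_trans)
  qed
  then have "bdd_above ((\<lambda>TU. \<bar>LINT z:fst TU \<times> snd TU|(M \<Otimes>\<^sub>M M). F z\<bar>) ` (sets M \<times> sets M))"
    by (rule bdd_aboveI2)
  from cSUP_upper[OF _ this, of "(T, U)"] TU show ?thesis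
    unfolding cut_norm_def by simp
qed

lemma cut_norm_le:
  assumes "\<And>T U. T \<in> sets M \<Longrightarrow> U \<in> sets M \<Longrightarrow> \<bar>LINT z:T \<times> U|(M \<Otimes>\<^sub>M M). F z\<bar> \<le> e"
  shows "cut_norm M F \<le> e"
  unfolding cut_norm_def using assms by (intro cSUP_least) auto

lemma cut_norm_nonneg: "integrable (M \<Otimes>\<^sub>M M) F \<Longrightarrow> 0 \<le> cut_norm M F"
  using abs_rectangle_integral_le_cut_norm[of M F "{}" "{}"] by simp

lemma abs_rectangle_integral_diff_le_cut_norm:
  assumes "integrable (M \<Otimes>\<^sub>M M) F" "integrable (M \<Otimes>\<^sub>M M) G" "T \<in> sets M" "U \<in> sets M"
  shows "\<bar>(LINT z:T \<times> U|(M \<Otimes>\<^sub>M M). F z) - (LINT z:T \<times> U|(M \<Otimes>\<^sub>M M). G z)\<bar>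
    \<le> cut_norm M (\<lambda>z. F z - G z)"
  using abs_rectangle_integral_le_cut_norm[of M "\<lambda>z. F z - G z" T U] assms
  by (simp add: set_integral_diff(2) integrable_imp_set_integrable)

lemma convergent_rectangle_integrals:
  assumes W: "\<And>n. integrable (M \<Otimes>\<^sub>M M) (W n)" and "cut_Cauchy M W"
    and TU: "T \<in> sets M" "U \<in> sets M"
  shows "convergent (\<lambda>n. LINT z:T \<times> U|(M \<Otimes>\<^sub>M M). W n z)"
proof -
  have "Cauchy (\<lambda>n. LINT z:T \<times> U|(M \<Otimes>\<^sub>M M). W n z)"
  proof (rule CauchyI)
    fix e :: real assume "0 < e"
    then obtain K where K: "\<And>m n. m \<ge> K \<Longrightarrow> n \<ge> K \<Longrightarrow> cut_norm M (\<lambda>z. W m z - W n z) < e"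
      using \<open>cut_Cauchy M W\<close> unfolding cut_Cauchy_def by blast
    have "norm ((LINT z:T \<times> U|(M \<Otimes>\<^sub>M M). W m z) - (LINT z:T \<times> U|(M \<Otimes>\<^sub>M M). W n z)) < e"
      if "m \<ge> K" "n \<ge> K" for m n
      using abs_rectangle_integral_diff_le_cut_norm[OF W W TU, of m n] K[OF that]
      unfolding real_norm_def by linarith
    then show "\<exists>K. \<forall>m\<ge>K. \<forall>n\<ge>K.
        norm ((LINT z:T \<times> U|(M \<Otimes>\<^sub>M M). W m z) - (LINT z:T \<times> U|(M \<Otimes>\<^sub>M M). W n z)) < e"
      by blast
  qed
  then show ?thesis
    by (simp add: Cauchy_convergent_iff)
qed

lemma cut_norm_tendsto_zero:
  assumes W: "\<And>n. integrable (M \<Otimes>\<^sub>M M) (W n)" and V: "integrable (M \<Otimes>\<^sub>M M) V"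
    and "cut_Cauchy M W"
    and rectangles: "\<And>T U. T \<in> sets M \<Longrightarrow> U \<in> sets M \<Longrightarrow>
      (\<lambda>n. LINT z:T \<times> U|(M \<Otimes>\<^sub>M M). W n z) \<longlonglongrightarrow> (LINT z:T \<times> U|(M \<Otimes>\<^sub>M M). V z)"
  shows "(\<lambda>n. cut_norm M (\<lambda>z. W n z - V z)) \<longlonglongrightarrow> 0"
proof (rule LIMSEQ_I)
  fix e :: real assume "e > 0"
  then have "e / 2 > 0"
    by simp
  then obtain K where K: "\<And>m n. m \<ge> K \<Longrightarrow> n \<ge> K \<Longrightarrow> cut_norm M (\<lambda>z. W m z - W n z) < e / 2"
    using \<open>cut_Cauchy M W\<close> unfolding cut_Cauchy_def by blast
  have small: "cut_norm M (\<lambda>z. W n z - V z) \<le> e / 2" if n: "n \<ge> K" for n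
  proof (rule cut_norm_le)
    fix T U assume TU: "T \<in> sets M" "U \<in> sets M"
    have "\<bar>(LINT z:T \<times> U|(M \<Otimes>\<^sub>M M). W n z) - (LINT z:T \<times> U|(M \<Otimes>\<^sub>M M). V z)\<bar> \<le> e / 2"
    proof (rule LIMSEQ_le_const2)
      show "(\<lambda>m. \<bar>(LINT z:T \<times> U|(M \<Otimes>\<^sub>M M). W n z) - (LINT z:T \<times> U|(M \<Otimes>\<^sub>M M). W m z)\<bar>)
          \<longlonglongrightarrow> \<bar>(LINT z:T \<times> U|(M \<Otimes>\<^sub>M M). W n z) - (LINT z:T \<times> U|(M \<Otimes>\<^sub>M M). V z)\<bar>"
        using TU by (intro tendsto_intros rectangles)
      have "\<bar>(LINT z:T \<times> U|(M \<Otimes>\<^sub>M M). W n z) - (LINT z:T \<times> U|(M \<Otimes>\<^sub>M M). W m z)\<bar> \<le> e / 2"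
        if "m \<ge> K" for m
        using abs_rectangle_integral_diff_le_cut_norm[OF W W TU, of n m] K[OF n that] by linarith
      then show "\<exists>K'. \<forall>m\<ge>K'. \<bar>(LINT z:T \<times> U|(M \<Otimes>\<^sub>M M). W n z) - (LINT z:T \<times> U|(M \<Otimes>\<^sub>M M). W m z)\<bar> \<le> e / 2"
        by blast
    qed
    then show "\<bar>LINT z:T \<times> U|(M \<Otimes>\<^sub>M M). W n z - V z\<bar> \<le> e / 2"
      using TU W V by (simp add: set_integral_diff(2) integrable_imp_set_integrable)
  qed
  show "\<exists>K. \<forall>n\<ge>K. norm (cut_norm M (\<lambda>z. W n z - V z) - 0) < e"
  proof (intro exI[of _ K] allI impI)
    fix n assume "n \<ge> K"
    have "0 \<le> cut_norm M (\<lambda>z. W n z - V z)"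
      using W V by (intro cut_norm_nonneg) simp
    then show "norm (cut_norm M (\<lambda>z. W n z - V z) - 0) < e"
      using small[OF \<open>n \<ge> K\<close>] \<open>e > 0\<close> by simp
  qed
qed

lemma rectangle_integrals_converge_by_exhaustion:
  assumes W: "\<And>n. integrable (M \<Otimes>\<^sub>M M) (W n)" and "cut_Cauchy M W"
    and V: "integrable (M \<Otimes>\<^sub>M M) V"
    and A: "range A \<subseteq> sets M" "incseq A" "(\<Union>k. A k) = space M"
    and TU: "T \<in> sets M" "U \<in> sets M"
    and inner: "\<And>k. (\<lambda>n. LINT z:(T \<inter> A k) \<times> (U \<inter> A k)|(M \<Otimes>\<^sub>M M). W n z)
      \<longlonglongrightarrow> (LINT z:(T \<inter> A k) \<times> (U \<inter> A k)|(M \<Otimes>\<^sub>M M). V z)"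
  shows "(\<lambda>n. LINT z:T \<times> U|(M \<Otimes>\<^sub>M M). W n z) \<longlonglongrightarrow> (LINT z:T \<times> U|(M \<Otimes>\<^sub>M M). V z)"
proof -
  define R where "R k = (T \<inter> A k) \<times> (U \<inter> A k)" for k
  have A_sets: "A k \<in> sets M" for k
    using A(1) by auto
  have R_sets: "R k \<in> sets (M \<Otimes>\<^sub>M M)" for k
    using A_sets TU by (simp add: R_def)
  have R_incseq: "incseq R"
    using A(2) by (auto simp: R_def incseq_def)
  have R_Union: "(\<Union>k. R k) = T \<times> U"
  proof (intro equalityI subsetI)
    fix z assume "z \<in> T \<times> U"
    then obtain x y i j where "z = (x, y)" "x \<in> T" "y \<in> U" "x \<in> A i" "y \<in> A j"
      using A(3) sets.sets_into_space[OF TU(1)] sets.sets_into_space[OF TU(2)] by blast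
    moreover have "A i \<subseteq> A (max i j)" "A j \<subseteq> A (max i j)"
      using A(2) by (auto simp: incseq_def)
    ultimately show "z \<in> (\<Union>k. R k)"
      by (auto simp: R_def)
  qed (auto simp: R_def)
  have exhaust: "(\<lambda>k. LINT z:R k|(M \<Otimes>\<^sub>M M). g z) \<longlonglongrightarrow> (LINT z:T \<times> U|(M \<Otimes>\<^sub>M M). g z)"
    if "integrable (M \<Otimes>\<^sub>M M) g" for g :: "'a \<times> 'a \<Rightarrow> real"
    using set_integral_cont_up[OF R_sets R_incseq, of g] R_Union TU that
    by (simp add: integrable_imp_set_integrable)
  obtain L where L: "(\<lambda>n. LINT z:T \<times> U|(M \<Otimes>\<^sub>M M). W n z) \<longlonglongrightarrow> L"
    using convergent_rectangle_integrals[OF W \<open>cut_Cauchy M W\<close> TU] by (auto simp: convergent_def)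
  \<comment> \<open>Rectangle integrals of the \<open>W n\<close> over \<open>R k\<close> and over \<open>T \<times> U\<close> are close uniformly in large \<open>k\<close>
    and \<open>n\<close>: compare both with a single \<open>W n\<^sub>0\<close> via the cut norm.\<close>
  have "(LINT z:T \<times> U|(M \<Otimes>\<^sub>M M). V z) = L"
  proof (rule limit_eq_if_uniformly_close[where a = "\<lambda>k n. LINT z:R k|(M \<Otimes>\<^sub>M M). W n z"])
    show "(\<lambda>n. LINT z:R k|(M \<Otimes>\<^sub>M M). W n z) \<longlonglongrightarrow> (LINT z:R k|(M \<Otimes>\<^sub>M M). V z)" for k
      using inner[of k] by (simp add: R_def)
    fix e :: real assume "e > 0"
    then have "e / 3 > 0"
      by simp
    then obtain n\<^sub>0 where "\<forall>m\<ge>n\<^sub>0. \<forall>n\<ge>n\<^sub>0. cut_norm M (\<lambda>z. W m z - W n z) < e / 3"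
      using \<open>cut_Cauchy M W\<close> unfolding cut_Cauchy_def by blast
    then have n\<^sub>0: "\<And>n. n \<ge> n\<^sub>0 \<Longrightarrow> cut_norm M (\<lambda>z. W n z - W n\<^sub>0 z) < e / 3"
      by blast
    obtain K where K: "\<And>k. k \<ge> K \<Longrightarrow>
        \<bar>(LINT z:R k|(M \<Otimes>\<^sub>M M). W n\<^sub>0 z) - (LINT z:T \<times> U|(M \<Otimes>\<^sub>M M). W n\<^sub>0 z)\<bar> < e / 3"
      using LIMSEQ_D[OF exhaust[OF W[of n\<^sub>0]], of "e / 3"] \<open>e > 0\<close> by auto
    have "\<bar>(LINT z:R k|(M \<Otimes>\<^sub>M M). W n z) - (LINT z:T \<times> U|(M \<Otimes>\<^sub>M M). W n z)\<bar> \<le> e"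
      if "k \<ge> K" "n \<ge> n\<^sub>0" for k n
    proof -
      have "\<bar>(LINT z:R k|(M \<Otimes>\<^sub>M M). W n z) - (LINT z:R k|(M \<Otimes>\<^sub>M M). W n\<^sub>0 z)\<bar> < e / 3"
        using abs_rectangle_integral_diff_le_cut_norm[OF W W, of "T \<inter> A k" "U \<inter> A k" n n\<^sub>0]
          n\<^sub>0[OF that(2)] A_sets TU by (simp add: R_def)
      moreover have "\<bar>(LINT z:T \<times> U|(M \<Otimes>\<^sub>M M). W n z) - (LINT z:T \<times> U|(M \<Otimes>\<^sub>M M). W n\<^sub>0 z)\<bar> < e / 3"
        using abs_rectangle_integral_diff_le_cut_norm[OF W W TU, of n n\<^sub>0] n\<^sub>0[OF that(2)] by simp
      ultimately show ?thesis
        using K[OF that(1)] by linarith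
    qed
    then show "\<exists>K n\<^sub>0. \<forall>k\<ge>K. \<forall>n\<ge>n\<^sub>0.
        \<bar>(LINT z:R k|(M \<Otimes>\<^sub>M M). W n z) - (LINT z:T \<times> U|(M \<Otimes>\<^sub>M M). W n z)\<bar> \<le> e"
      by blast
  qed (use L exhaust[OF V] in auto)
  with L show ?thesis
    by simp
qed

lemma set_integral_rectangle_swap:
  fixes V :: "'a \<times> 'a \<Rightarrow> real"
  assumes M: "sigma_finite_measure M" and V: "integrable (M \<Otimes>\<^sub>M M) V"
    and TU: "T \<in> sets M" "U \<in> sets M"
  shows "(LINT z:T \<times> U|(M \<Otimes>\<^sub>M M). V (snd z, fst z)) = (LINT z:U \<times> T|(M \<Otimes>\<^sub>M M). V z)"
proof -
  interpret pair_sigma_finite M M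
    using M by (simp add: pair_sigma_finite_def)
  have "(LINT z:U \<times> T|(M \<Otimes>\<^sub>M M). V z) = (\<integral>(x, y). indicator (U \<times> T) (y, x) * V (y, x) \<partial>(M \<Otimes>\<^sub>M M))"
    unfolding set_lebesgue_integral_def using TU V
    by (subst integral_product_swap[symmetric]) simp_all
  also have "\<dots> = (LINT z:T \<times> U|(M \<Otimes>\<^sub>M M). V (snd z, fst z))"
    unfolding set_lebesgue_integral_def
    by (intro Bochner_Integration.integral_cong) (auto simp: indicator_def)
  finally show ?thesis
    by simp
qed

lemma graphon_rectangle_swap:
  assumes M: "sigma_finite_measure M" and W: "graphon M W" and TU: "T \<in> sets M" "U \<in> sets M"
  shows "(LINT z:U \<times> T|(M \<Otimes>\<^sub>M M). W z) = (LINT z:T \<times> U|(M \<Otimes>\<^sub>M M). W z)"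
proof -
  have [measurable]: "W \<in> borel_measurable (M \<Otimes>\<^sub>M M)" "T \<in> sets M" "U \<in> sets M"
    using W TU by (auto simp: graphon_def)
  have "AE z in M \<Otimes>\<^sub>M M. indicator (T \<times> U) z *\<^sub>R W (snd z, fst z) = indicator (T \<times> U) z *\<^sub>R W z"
    using W by (auto simp: graphon_def elim!: eventually_mono)
  then have "(LINT z:T \<times> U|(M \<Otimes>\<^sub>M M). W (snd z, fst z)) = (LINT z:T \<times> U|(M \<Otimes>\<^sub>M M). W z)"
    unfolding set_lebesgue_integral_def by (intro integral_cong_AE) measurable
  moreover have "(LINT z:U \<times> T|(M \<Otimes>\<^sub>M M). W z) = (LINT z:T \<times> U|(M \<Otimes>\<^sub>M M). W (snd z, fst z))"
    using set_integral_rectangle_swap[OF M _ TU] W by (simp add: graphon_def)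
  ultimately show ?thesis
    by simp
qed

lemma graphon_symmetrization:
  fixes V :: "'a \<times> 'a \<Rightarrow> real"
  assumes M: "sigma_finite_measure M" and V: "integrable (M \<Otimes>\<^sub>M M) V"
  shows "graphon M (\<lambda>z. (V z + V (snd z, fst z)) / 2)"
    and "\<And>T U. T \<in> sets M \<Longrightarrow> U \<in> sets M \<Longrightarrow>
      (LINT z:T \<times> U|(M \<Otimes>\<^sub>M M). (V z + V (snd z, fst z)) / 2)
        = ((LINT z:T \<times> U|(M \<Otimes>\<^sub>M M). V z) + (LINT z:U \<times> T|(M \<Otimes>\<^sub>M M). V z)) / 2"
proof -
  interpret pair_sigma_finite M M
    using M by (simp add: pair_sigma_finite_def)
  have V_swap: "integrable (M \<Otimes>\<^sub>M M) (\<lambda>z. V (snd z, fst z))"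
    using integrable_product_swap[OF V] by (simp add: case_prod_beta')
  then show "graphon M (\<lambda>z. (V z + V (snd z, fst z)) / 2)"
    using V by (simp add: graphon_def)
  fix T U assume TU: "T \<in> sets M" "U \<in> sets M"
  then show "(LINT z:T \<times> U|(M \<Otimes>\<^sub>M M). (V z + V (snd z, fst z)) / 2)
      = ((LINT z:T \<times> U|(M \<Otimes>\<^sub>M M). V z) + (LINT z:U \<times> T|(M \<Otimes>\<^sub>M M). V z)) / 2"
    using set_integral_rectangle_swap[OF M V TU] V V_swap
    by (subst set_integral_divide_zero, subst set_integral_add(2))
      (simp_all add: integrable_imp_set_integrable)
qed

lemma squares_setwise_convergent:
  assumes M: "sigma_finite_measure M" and UI: "uniformly_integrable_seq (M \<Otimes>\<^sub>M M) W C"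
    and "cut_Cauchy M W"
    and A: "range A \<subseteq> sets M" "\<And>k. emeasure M (A k) \<noteq> \<infinity>" "incseq A"
  shows "setwise_convergent_ui_seq (M \<Otimes>\<^sub>M M) W C (\<lambda>k. A k \<times> A k)"
proof -
  interpret M: sigma_finite_measure M
    by (fact M)
  interpret uniformly_integrable_seq "M \<Otimes>\<^sub>M M" W C
    by (fact UI)
  have rectangles: "convergent (\<lambda>n. LINT z:T \<times> U|(M \<Otimes>\<^sub>M M). W n z)"
    if "T \<in> sets M" "U \<in> sets M" for T U
    using convergent_rectangle_integrals[OF integrable \<open>cut_Cauchy M W\<close> that] .
  have squares: "A k \<times> A k \<in> sets (M \<Otimes>\<^sub>M M)" "emeasure (M \<Otimes>\<^sub>M M) (A k \<times> A k) < \<infinity>" for k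
    using A(1,2) by (auto simp: M.emeasure_pair_measure_Times ennreal_mult_less_top less_top)
  show ?thesis
  proof (intro setwise_convergent_ui_seq.intro[OF UI] setwise_convergent_ui_seq_axioms.intro squares)
    show "incseq (\<lambda>k. A k \<times> A k)"
      using A(3) by (auto simp: incseq_def)
    show "convergent (\<lambda>n. LINT z:E \<inter> A k \<times> A k|(M \<Otimes>\<^sub>M M). W n z)"
      if "E \<in> sets (M \<Otimes>\<^sub>M M)" for k E
    proof (rule convergent_set_integrals_Int[OF sets_pair_measure[folded space_pair_measure]
          Int_stable_pair_measure_generator pair_measure_closed[folded space_pair_measure] squares])
      show "convergent (\<lambda>n. LINT z:A k \<times> A k|(M \<Otimes>\<^sub>M M). W n z)"
        using A(1) by (intro rectangles) auto
      show "convergent (\<lambda>n. LINT z:G \<inter> A k \<times> A k|(M \<Otimes>\<^sub>M M). W n z)"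
        if G: "G \<in> {a \<times> b |a b. a \<in> sets M \<and> b \<in> sets M}" for G
      proof -
        obtain a b where "G = a \<times> b" "a \<in> sets M" "b \<in> sets M"
          using G by blast
        moreover have "a \<times> b \<inter> A k \<times> A k = (a \<inter> A k) \<times> (b \<inter> A k)"
          by auto
        ultimately show ?thesis
          using A(1) by (auto intro!: rectangles)
      qed
    qed fact
  qed
qed

lemma exists_rectangle_limit:
  assumes M: "sigma_finite_measure M" and UI: "uniformly_integrable_seq (M \<Otimes>\<^sub>M M) W C"
    and "cut_Cauchy M W"
  obtains V where "integrable (M \<Otimes>\<^sub>M M) V"
    "\<And>T U. T \<in> sets M \<Longrightarrow> U \<in> sets M \<Longrightarrow>
      (\<lambda>n. LINT z:T \<times> U|(M \<Otimes>\<^sub>M M). W n z) \<longlonglongrightarrow> (LINT z:T \<times> U|(M \<Otimes>\<^sub>M M). V z)"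
proof -
  interpret MM: pair_sigma_finite M M
    using M by (simp add: pair_sigma_finite_def)
  obtain A where A: "range A \<subseteq> sets M" "(\<Union>i. A i) = space M" "\<And>i. emeasure M (A i) \<noteq> \<infinity>"
    "incseq A"
    using MM.M1.sigma_finite_incseq by blast
  interpret setwise_convergent_ui_seq "M \<Otimes>\<^sub>M M" W C "\<lambda>k. A k \<times> A k"
    using squares_setwise_convergent[OF M UI \<open>cut_Cauchy M W\<close> A(1,3,4)] .
  obtain V where V: "integrable (M \<Otimes>\<^sub>M M) V"
    and limits: "\<And>k E. E \<in> sets (M \<Otimes>\<^sub>M M) \<Longrightarrow>
      (\<lambda>n. LINT z:E \<inter> A k \<times> A k|(M \<Otimes>\<^sub>M M). W n z) \<longlonglongrightarrow> (LINT z:E \<inter> A k \<times> A k|(M \<Otimes>\<^sub>M M). V z)"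
    using exists_limit_density[OF MM.P.sigma_finite_measure_axioms] by blast
  have "(\<lambda>n. LINT z:T \<times> U|(M \<Otimes>\<^sub>M M). W n z) \<longlonglongrightarrow> (LINT z:T \<times> U|(M \<Otimes>\<^sub>M M). V z)"
    if TU: "T \<in> sets M" "U \<in> sets M" for T U
  proof (rule rectangle_integrals_converge_by_exhaustion[OF integrable \<open>cut_Cauchy M W\<close> V A(1,4,2) TU])
    have "T \<times> U \<inter> A k \<times> A k = (T \<inter> A k) \<times> (U \<inter> A k)" for k
      by auto
    then show "(\<lambda>n. LINT z:(T \<inter> A k) \<times> (U \<inter> A k)|(M \<Otimes>\<^sub>M M). W n z)
        \<longlonglongrightarrow> (LINT z:(T \<inter> A k) \<times> (U \<inter> A k)|(M \<Otimes>\<^sub>M M). V z)" for k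
      using limits[of "T \<times> U" k] TU by simp
  qed
  with V show thesis
    by (rule that)
qed

lemma cut_Cauchy_graphons_converge:
  assumes M: "sigma_finite_measure M" and W: "\<And>n. graphon M (W n)"
    and UI: "uniformly_integrable_seq (M \<Otimes>\<^sub>M M) W C" and cut: "cut_Cauchy M W"
  shows "\<exists>V. graphon M V \<and> (\<lambda>n. cut_norm M (\<lambda>z. W n z - V z)) \<longlonglongrightarrow> 0"
proof -
  obtain V where V: "integrable (M \<Otimes>\<^sub>M M) V"
    and rectangles: "\<And>T U. T \<in> sets M \<Longrightarrow> U \<in> sets M \<Longrightarrow>
      (\<lambda>n. LINT z:T \<times> U|(M \<Otimes>\<^sub>M M). W n z) \<longlonglongrightarrow> (LINT z:T \<times> U|(M \<Otimes>\<^sub>M M). V z)"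
    using exists_rectangle_limit[OF M UI cut] by blast
  define V' where "V' z = (V z + V (snd z, fst z)) / 2" for z
  \<comment> \<open>The \<open>W n\<close> are symmetric, so their rectangle limits are symmetric and averaging \<open>V\<close>
    with its reflection does not change them.\<close>
  have "(\<lambda>n. LINT z:T \<times> U|(M \<Otimes>\<^sub>M M). W n z) \<longlonglongrightarrow> (LINT z:T \<times> U|(M \<Otimes>\<^sub>M M). V' z)"
    if TU: "T \<in> sets M" "U \<in> sets M" for T U
  proof -
    have "(\<lambda>n. ((LINT z:T \<times> U|(M \<Otimes>\<^sub>M M). W n z) + (LINT z:U \<times> T|(M \<Otimes>\<^sub>M M). W n z)) / 2)
        \<longlonglongrightarrow> ((LINT z:T \<times> U|(M \<Otimes>\<^sub>M M). V z) + (LINT z:U \<times> T|(M \<Otimes>\<^sub>M M). V z)) / 2"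
      using TU by (auto intro!: tendsto_intros rectangles)
    then show ?thesis
      using graphon_rectangle_swap[OF M W TU] graphon_symmetrization(2)[OF M V TU]
      by (simp add: V'_def)
  qed
  moreover have "graphon M V'"
    unfolding V'_def using graphon_symmetrization(1)[OF M V] .
  moreover have "integrable (M \<Otimes>\<^sub>M M) (W n)" for n
    using W by (simp add: graphon_def)
  ultimately show ?thesis
    using cut by (intro exI[of _ V'] conjI cut_norm_tendsto_zero) (auto simp: graphon_def)
qed

lemma unif_integrable_imp_uniformly_integrable_seq:
  assumes "unif_integrable M A" "\<And>n. W n \<in> A" "\<And>n. integrable (M \<Otimes>\<^sub>M M) (W n)"
  obtains C where "uniformly_integrable_seq (M \<Otimes>\<^sub>M M) W C"
proof -
  obtain C where C: "\<forall>F\<in>A. (LINT z|(M \<Otimes>\<^sub>M M). \<bar>F z\<bar>) \<le> C"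
    and tails: "\<forall>e>0. \<exists>B0. \<forall>B\<ge>B0. \<forall>F\<in>A.
      (LINT z:{z \<in> space (M \<Otimes>\<^sub>M M). \<bar>F z\<bar> > B}|(M \<Otimes>\<^sub>M M). \<bar>F z\<bar>) \<le> e"
    using assms(1) unfolding unif_integrable_def by blast
  have "uniformly_integrable_seq (M \<Otimes>\<^sub>M M) W C"
  proof
    show "(LINT z|(M \<Otimes>\<^sub>M M). \<bar>W n z\<bar>) \<le> C" for n
      using C assms(2) by blast
    show "\<exists>B0. \<forall>B\<ge>B0. \<forall>n. (LINT z:{z \<in> space (M \<Otimes>\<^sub>M M). B < \<bar>W n z\<bar>}|(M \<Otimes>\<^sub>M M). \<bar>W n z\<bar>) \<le> e"
      if "e > 0" for e
      using tails that assms(2) by blast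
  qed (fact assms(3))
  then show thesis
    by (rule that)
qed

theorem mainTheorem7:
  fixes M :: "'a measure" and A :: "('a \<times> 'a \<Rightarrow> real) set"
  assumes "sigma_finite_measure M"
    and "\<forall>W\<in>A. graphon M W"
    and "unif_integrable M A"
  shows "\<forall>W :: nat \<Rightarrow> ('a \<times> 'a \<Rightarrow> real).
           (\<forall>n. W n \<in> A) \<longrightarrow>
           (\<forall>e>0. \<exists>N. \<forall>m\<ge>N. \<forall>n\<ge>N. cut_norm M (\<lambda>z. W m z - W n z) < e) \<longrightarrow>
           (\<exists>V. graphon M V \<and> (\<lambda>n. cut_norm M (\<lambda>z. W n z - V z)) \<longlonglongrightarrow> 0)"
proof (intro allI impI)
  fix W :: "nat \<Rightarrow> ('a \<times> 'a \<Rightarrow> real)"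
  assume WA: "\<forall>n. W n \<in> A"
    and "\<forall>e>0. \<exists>N. \<forall>m\<ge>N. \<forall>n\<ge>N. cut_norm M (\<lambda>z. W m z - W n z) < e"
  then have cut: "cut_Cauchy M W"
    by (simp add: cut_Cauchy_def)
  have graphons: "graphon M (W n)" for n
    using assms(2) WA by blast
  then have "integrable (M \<Otimes>\<^sub>M M) (W n)" for n
    by (simp add: graphon_def)
  then obtain C where "uniformly_integrable_seq (M \<Otimes>\<^sub>M M) W C"
    by (rule unif_integrable_imp_uniformly_integrable_seq[OF assms(3) WA[rule_format]])
  then show "\<exists>V. graphon M V \<and> (\<lambda>n. cut_norm M (\<lambda>z. W n z - V z)) \<longlonglongrightarrow> 0"
    by (rule cut_Cauchy_graphons_converge[OF assms(1) graphons _ cut])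
qed

end
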